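(* Let $n\in\mathbb{N}$ and let $\underline{\Delta},\tilde{\Delta}:\{k\in\mathbb{N}_0^{\{0,1\}^2}:k_{++}=n\}\to[-1,1]$ be two lower confidence bounds for the parameter $q\mapsto q_{01}-q_{10}$ in the multinomial model $\mathcal{M}:=(\mathrm{M}_{n,q}:q\in\mathrm{prob}(\{0,1\}^2))$ which are equivalent, i.e. $\mathrm{M}_{n,q}(\tilde{\Delta}\ge t)=\mathrm{M}_{n,q}(\underline{\Delta}\ge t)$ for all $q\in\mathrm{prob}(\{0,1\}^2)$ and all $t<q_{01}-q_{10}$. Then $\underline{\Delta}=\tilde{\Delta}$.
   Context: $\mathrm{prob}(\{0,1\}^2)$ is the set of probability densities on $\{0,1\}^2$; $\mathrm{M}_{n,q}$ is the multinomial distribution with sample size $n$ and probability vector $q$; $k_{++}=\sum_{i,j\in\{0,1\}}k_{ij}$. A lower $\beta$-confidence bound for a parameter $\kappa$ in a model $(P_\theta)$ is a function $\underline{\kappa}$ with $P_\theta(\underline{\kappa}\le\kappa(\theta))\ge\beta$ for all $\theta$ (here for some fixed $\beta\in[0,1]$). *)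

theory Defs
  imports Complex_Main
begin

text \<open>Index set {0,1}^2 is rendered as bool \<times> bool, with False = 0 and True = 1.
  So q_01 = q (False, True) and q_10 = q (True, False).\<close>

definition kspace :: "nat \<Rightarrow> (bool \<times> bool \<Rightarrow> nat) set" where
  "kspace n = {k. (\<Sum>ij\<in>UNIV. k ij) = n}"

definition probs :: "(bool \<times> bool \<Rightarrow> real) set" where
  "probs = {q. (\<forall>ij. 0 \<le> q ij) \<and> (\<Sum>ij\<in>UNIV. q ij) = 1}"

definition mult_dens :: "nat \<Rightarrow> (bool \<times> bool \<Rightarrow> real) \<Rightarrow> (bool \<times> bool \<Rightarrow> nat) \<Rightarrow> real" where
  "mult_dens n q k = fact n / (\<Prod>ij\<in>UNIV. fact (k ij)) * (\<Prod>ij\<in>UNIV. q ij ^ k ij)"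

definition mult_prob :: "nat \<Rightarrow> (bool \<times> bool \<Rightarrow> real) \<Rightarrow> (bool \<times> bool \<Rightarrow> nat) set \<Rightarrow> real" where
  "mult_prob n q A = (\<Sum>k\<in>kspace n \<inter> A. mult_dens n q k)"

definition Delta :: "(bool \<times> bool \<Rightarrow> real) \<Rightarrow> real" where
  "Delta q = q (False, True) - q (True, False)"

definition lower_conf_bound ::
  "nat \<Rightarrow> real \<Rightarrow> ((bool \<times> bool \<Rightarrow> real) \<Rightarrow> real) \<Rightarrow> ((bool \<times> bool \<Rightarrow> nat) \<Rightarrow> real) \<Rightarrow> bool" where
  "lower_conf_bound n \<beta> \<kappa> L \<longleftrightarrow> (\<forall>q\<in>probs. mult_prob n q {k. L k \<le> \<kappa> q} \<ge> \<beta>)"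

end

theory Submission
  imports Defs "HOL-Computational_Algebra.Polynomial" "HOL-Library.FuncSet"
begin

text \<open>Along the curve q_x proportional to (x, 1, x^N, x^(N^2)) on the cells
  00, 01, 10, 11, Delta q_x tends to 1 as x \<rightarrow> 0+, and the multinomial density of k is,
  up to the common factor S(x)^n, the monomial (n! / \<Prod>k_ij!) x^(k_00 + N k_10 + N^2 k_11).
  For N = n + 1 these exponents are base-N numerals, hence distinct on the sample space.
  So if two events have equal probability under all q with Delta q > t for some t < 1,
  a polynomial with these coefficients vanishes on an interval, and the events coincide.
  Applied to {L' \<ge> t} and {L \<ge> t} with t midway between L k and L' k, this forces
  L k = L' k.\<close>

lemma sum_UNIV_bool_prod:
  "(\<Sum>ij\<in>(UNIV :: (bool \<times> bool) set). f ij) =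
     f (False, False) + f (False, True) + f (True, False) + f (True, True)"
  by (simp add: UNIV_bool add.assoc flip: UNIV_Times_UNIV)

lemma finite_kspace: "finite (kspace n)"
proof (rule finite_subset)
  show "kspace n \<subseteq> PiE UNIV (\<lambda>_. {..n})"
  proof
    fix k assume "k \<in> kspace n"
    then have "k (False, False) + k (False, True) + k (True, False) + k (True, True) = n"
      by (simp add: kspace_def sum_UNIV_bool_prod)
    then have "k (a, b) \<le> n" for a b
      by (cases a; cases b) auto
    then show "k \<in> PiE UNIV (\<lambda>_. {..n})"
      by auto
  qed
  show "finite (PiE (UNIV :: (bool \<times> bool) set) (\<lambda>_. {..n}))"
    by (rule finite_PiE) auto
qed

lemma add_mult_eq_imp_eq:
  fixes a b a' b' N :: nat
  assumes "a < N" "a' < N" "a + N * b = a' + N * b'"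
  shows "a = a'" and "b = b'"
proof -
  have "a = (a + N * b) mod N" "b = (a + N * b) div N"
    using assms(1) by simp_all
  moreover have "a' = (a' + N * b') mod N" "b' = (a' + N * b') div N"
    using assms(2) by simp_all
  ultimately show "a = a'" and "b = b'"
    using assms(3) by metis+
qed

lemma coeffs_zero_if_sum_powers_vanish:
  fixes c :: "'b \<Rightarrow> 'a :: idom"
  assumes "finite K" "inj_on e K" "infinite X"
    and vanish: "\<forall>x\<in>X. (\<Sum>k\<in>K. c k * x ^ e k) = 0"
    and "k \<in> K"
  shows "c k = 0"
proof -
  define p where "p = (\<Sum>k\<in>K. monom (c k) (e k))"
  have "X \<subseteq> {x. poly p x = 0}"
    using vanish by (auto simp: p_def poly_sum poly_monom)
  then have "p = 0"
    using \<open>infinite X\<close> poly_roots_finite finite_subset by blast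
  moreover have "coeff p (e k) = c k"
  proof -
    have "coeff p (e k) = (\<Sum>k'\<in>K. if k' = k then c k' else 0)"
      unfolding p_def coeff_sum coeff_monom
      using \<open>inj_on e K\<close> \<open>k \<in> K\<close> by (intro sum.cong) (auto dest: inj_onD)
    then show ?thesis
      using \<open>finite K\<close> \<open>k \<in> K\<close> by simp
  qed
  ultimately show ?thesis
    by simp
qed

definition cell_degree :: "nat \<Rightarrow> bool \<times> bool \<Rightarrow> nat" where
  "cell_degree N ij =
     (case ij of (False, False) \<Rightarrow> 1 | (False, True) \<Rightarrow> 0 | (True, False) \<Rightarrow> N | (True, True) \<Rightarrow> N * N)"

definition total_degree :: "nat \<Rightarrow> (bool \<times> bool \<Rightarrow> nat) \<Rightarrow> nat" where
  "total_degree N k = (\<Sum>ij\<in>UNIV. cell_degree N ij * k ij)"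

lemma total_degree_eq:
  "total_degree N k = k (False, False) + N * (k (True, False) + N * k (True, True))"
  by (simp add: total_degree_def sum_UNIV_bool_prod cell_degree_def algebra_simps)

lemma inj_on_total_degree:
  assumes "n < N"
  shows "inj_on (total_degree N) (kspace n)"
proof
  fix k k' assume k: "k \<in> kspace n" and k': "k' \<in> kspace n"
    and eq: "total_degree N k = total_degree N k'"
  have sum: "k (False, False) + k (False, True) + k (True, False) + k (True, True) = n"
    "k' (False, False) + k' (False, True) + k' (True, False) + k' (True, True) = n"
    using k k' by (simp_all add: kspace_def sum_UNIV_bool_prod)
  then have digits: "k (False, False) < N" "k' (False, False) < N"
    "k (True, False) < N" "k' (True, False) < N"
    using assms by linarith+
  then have ff: "k (False, False) = k' (False, False)"
    and inner: "k (True, False) + N * k (True, True) = k' (True, False) + N * k' (True, True)"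
    using add_mult_eq_imp_eq[OF _ _ eq[unfolded total_degree_eq]] by auto
  moreover have "k (True, False) = k' (True, False)" "k (True, True) = k' (True, True)"
    using add_mult_eq_imp_eq[OF _ _ inner] digits by auto
  ultimately have "k (a, b) = k' (a, b)" for a b
    using sum by (cases a; cases b) auto
  then show "k = k'"
    by (intro ext) (metis prod.collapse)
qed

definition monomial_prob :: "nat \<Rightarrow> real \<Rightarrow> bool \<times> bool \<Rightarrow> real" where
  "monomial_prob N x ij = x ^ cell_degree N ij / (\<Sum>ij'\<in>UNIV. x ^ cell_degree N ij')"

lemma sum_power_cell_degree_pos: "0 < x \<Longrightarrow> 0 < (\<Sum>ij\<in>UNIV. x ^ cell_degree N ij)"
  for x :: real
  by (intro sum_pos) auto

lemma monomial_prob_in_probs: "0 < x \<Longrightarrow> monomial_prob N x \<in> probs"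
  using sum_power_cell_degree_pos[of x N]
  by (simp add: probs_def monomial_prob_def flip: sum_divide_distrib)

lemma mult_dens_monomial_prob:
  assumes "k \<in> kspace n"
  shows "mult_dens n (monomial_prob N x) k =
    fact n / (\<Prod>ij\<in>UNIV. fact (k ij)) * x ^ total_degree N k / (\<Sum>ij\<in>UNIV. x ^ cell_degree N ij) ^ n"
proof -
  have "(\<Prod>ij\<in>UNIV. (x ^ cell_degree N ij) ^ k ij) = x ^ total_degree N k"
    by (simp add: total_degree_def power_sum power_mult)
  moreover have "(\<Prod>ij\<in>UNIV. S ^ k ij) = S ^ n" for S :: real
    using assms by (simp add: kspace_def flip: power_sum)
  ultimately show ?thesis
    by (simp add: mult_dens_def monomial_prob_def power_divide prod_dividef)
qed

lemma Delta_monomial_prob_tendsto: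
  assumes "0 < N"
  shows "((\<lambda>x. Delta (monomial_prob N x)) \<longlongrightarrow> 1) (at_right 0)"
proof -
  have "((\<lambda>x. (1 - x ^ N) / (x + 1 + x ^ N + x ^ (N * N))) \<longlongrightarrow>
          (1 - 0 ^ N) / (0 + 1 + 0 ^ N + 0 ^ (N * N))) (at_right (0 :: real))"
    by (intro tendsto_intros) (auto simp: power_0_left)
  then show ?thesis
    using assms by (simp add: Delta_def monomial_prob_def cell_degree_def sum_UNIV_bool_prod
        diff_divide_distrib power_0_left)
qed

lemma kspace_events_eq_if_mult_prob_eq:
  fixes A B :: "(bool \<times> bool \<Rightarrow> nat) set"
  assumes "t < 1"
    and eq: "\<forall>q\<in>probs. t < Delta q \<longrightarrow> mult_prob n q A = mult_prob n q B"
  shows "kspace n \<inter> A = kspace n \<inter> B"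
proof -
  let ?N = "Suc n"
  define w :: "(bool \<times> bool \<Rightarrow> nat) \<Rightarrow> real"
    where "w k = fact n / (\<Prod>ij\<in>UNIV. fact (k ij))" for k
  define c where "c k = w k * (of_bool (k \<in> A) - of_bool (k \<in> B))" for k
  have "\<forall>\<^sub>F x in at_right 0. t < Delta (monomial_prob ?N x)"
    using order_tendstoD(1)[OF Delta_monomial_prob_tendsto \<open>t < 1\<close>] by simp
  then obtain b :: real where "0 < b"
    and b: "\<And>x. 0 < x \<Longrightarrow> x < b \<Longrightarrow> t < Delta (monomial_prob ?N x)"
    by (auto simp: eventually_at_right_field)
  have vanish: "(\<Sum>k\<in>kspace n. c k * x ^ total_degree ?N k) = 0" if x: "x \<in> {0<..<b}" for x
  proof -
    define S where "S = (\<Sum>ij\<in>UNIV. x ^ cell_degree ?N ij) ^ n"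
    have "S \<noteq> 0"
      using x sum_power_cell_degree_pos[of x ?N] by (simp add: S_def)
    have "mult_prob n (monomial_prob ?N x) A = mult_prob n (monomial_prob ?N x) B"
      using eq monomial_prob_in_probs b x by simp
    then have "(\<Sum>k\<in>kspace n \<inter> A. w k * x ^ total_degree ?N k / S) =
               (\<Sum>k\<in>kspace n \<inter> B. w k * x ^ total_degree ?N k / S)"
      by (simp add: mult_prob_def mult_dens_monomial_prob w_def S_def)
    then have "(\<Sum>k\<in>kspace n \<inter> A. w k * x ^ total_degree ?N k) =
               (\<Sum>k\<in>kspace n \<inter> B. w k * x ^ total_degree ?N k)"
      using \<open>S \<noteq> 0\<close> by (simp flip: sum_divide_distrib)
    moreover have "(\<Sum>k\<in>kspace n. c k * x ^ total_degree ?N k) =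
        (\<Sum>k\<in>kspace n. if k \<in> A then w k * x ^ total_degree ?N k else 0) -
        (\<Sum>k\<in>kspace n. if k \<in> B then w k * x ^ total_degree ?N k else 0)"
      by (simp add: c_def algebra_simps flip: sum_subtractf) (rule sum.cong, auto)
    ultimately show ?thesis
      by (simp add: sum.inter_restrict finite_kspace)
  qed
  have coeff_zero: "c k = 0" if "k \<in> kspace n" for k
    using vanish
    by (intro coeffs_zero_if_sum_powers_vanish[OF finite_kspace inj_on_total_degree[of n ?N]
          infinite_Ioo[OF \<open>0 < b\<close>] _ that]) auto
  have w_pos: "w k > 0" for k
    by (simp add: w_def prod_pos)
  have "k \<in> A \<longleftrightarrow> k \<in> B" if "k \<in> kspace n" for k
    using coeff_zero[OF that] w_pos[of k] by (cases "k \<in> A"; cases "k \<in> B") (auto simp: c_def)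
  then show ?thesis
    by blast
qed

theorem lemma14:
  fixes n :: nat and \<beta> :: real
    and L L' :: "(bool \<times> bool \<Rightarrow> nat) \<Rightarrow> real"
  assumes "n \<ge> 1"
    and "0 \<le> \<beta>" and "\<beta> \<le> 1"
    and "\<forall>k\<in>kspace n. L k \<in> {-1..1}"
    and "\<forall>k\<in>kspace n. L' k \<in> {-1..1}"
    and "lower_conf_bound n \<beta> Delta L"
    and "lower_conf_bound n \<beta> Delta L'"
    and "\<forall>q\<in>probs. \<forall>t. t < Delta q \<longrightarrow>
           mult_prob n q {k. L' k \<ge> t} = mult_prob n q {k. L k \<ge> t}"
  shows "\<forall>k\<in>kspace n. L k = L' k"
proof
  fix k assume k: "k \<in> kspace n"
  have events_eq: "kspace n \<inter> {k. L' k \<ge> t} = kspace n \<inter> {k. L k \<ge> t}" if "t < 1" for t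
    using kspace_events_eq_if_mult_prob_eq[OF that] assms(8) by blast
  define t where "t = (L k + L' k) / 2"
  have "L k \<le> 1" "L' k \<le> 1"
    using assms(4,5) k by auto
  then have "t < 1" if "L k \<noteq> L' k"
    using that unfolding t_def by (cases "L k < L' k") auto
  moreover have "L k = L' k" if "L' k \<ge> t \<longleftrightarrow> L k \<ge> t"
    using that by (auto simp: t_def)
  ultimately show "L k = L' k"
    using events_eq k by blast
qed

end
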